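(* Let $q\neq 2$ be a prime power with $q\equiv -1\pmod 3$, let $G=\mathrm{SU}_3(q)$, and let $\mathcal{C}=C_3^{(0,l)}$ for some $0\leq l\leq 2$. Then $K_{\mathcal{C}}$ is irreducible.
   Context: $\mathrm{SU}_3(q)$ is the group of determinant-one matrices $M\in\mathrm{GL}_3(q^2)$ with $M^*JM=J$, where $J$ has ones on the anti-diagonal and zeros elsewhere and $M^*$ is the transpose of $M$ with every entry raised to the $q$-th power. Let $\xi$ be a generator of $\mathbb{F}_{q^2}^\times$. For $0\leq l\leq 2$, $C_3^{(0,l)}$ is the $\mathrm{SU}_3(q)$-conjugacy class of $\begin{pmatrix}1&\xi^{l(q-1)}&\alpha\\0&1&-\xi^{-l(q-1)}\\0&0&1\end{pmatrix}$ where $\alpha\in\mathbb{F}_{q^2}^\times$ satisfies $\alpha+\alpha^q+1=0$. For a finite group $G$ and a subset $\mathcal{C}\subseteq G\setminus\{1\}$ closed under conjugation, the Killing form is $K_{\mathcal{C}}(a,b)=|C_G(ab)\cap\mathcal{C}|$ on the basis $\mathcal{C}$; it is irreducible if the graph with vertex set $\mathcal{C}$, in which distinct $a,b$ are adjacent iff $C_G(ab)\cap\mathcal{C}\neq\emptyset$, is connected. *)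

theory Defs
  imports "HOL-Analysis.Analysis"
begin

text \<open>Matrices are 3x3 matrices over a finite field 'a (playing the role of F_{q^2}).\<close>

definition prime_power :: "nat \<Rightarrow> bool" where
  "prime_power q \<longleftrightarrow> (\<exists>p k. prime p \<and> k > 0 \<and> q = p ^ k)"

definition Jmat :: "'a::{zero,one} ^3^3" where
  "Jmat = vector [vector [0,0,1], vector [0,1,0], vector [1,0,0]]"

definition conj_star :: "nat \<Rightarrow> 'a::field ^3^3 \<Rightarrow> 'a ^3^3" where
  "conj_star q M = transpose (\<chi> i j. (M $ i $ j) ^ q)"

definition SU3 :: "nat \<Rightarrow> ('a::field ^3^3) set" where
  "SU3 q = {M. det M = 1 \<and> conj_star q M ** Jmat ** M = Jmat}"

definition conj_class :: "('a::field ^3^3) set \<Rightarrow> 'a ^3^3 \<Rightarrow> ('a ^3^3) set" where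
  "conj_class G x = {g ** x ** matrix_inv g | g. g \<in> G}"

definition centralizer_in :: "('a::field ^3^3) set \<Rightarrow> 'a ^3^3 \<Rightarrow> ('a ^3^3) set" where
  "centralizer_in G x = {g \<in> G. g ** x = x ** g}"

definition killing_form :: "('a::field ^3^3) set \<Rightarrow> ('a ^3^3) set \<Rightarrow> 'a^3^3 \<Rightarrow> 'a^3^3 \<Rightarrow> nat" where
  "killing_form G C a b = card (centralizer_in G (a ** b) \<inter> C)"

definition killing_graph :: "('a::field ^3^3) set \<Rightarrow> ('a ^3^3) set \<Rightarrow> (('a^3^3) \<times> ('a^3^3)) set" where
  "killing_graph G C = {(a, b). a \<in> C \<and> b \<in> C \<and> a \<noteq> b \<and> centralizer_in G (a ** b) \<inter> C \<noteq> {}}"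

definition killing_irreducible :: "('a::field ^3^3) set \<Rightarrow> ('a ^3^3) set \<Rightarrow> bool" where
  "killing_irreducible G C \<longleftrightarrow> C \<noteq> {} \<and> (\<forall>a\<in>C. \<forall>b\<in>C. (a, b) \<in> (killing_graph G C)\<^sup>*)"

definition rep_C3 :: "nat \<Rightarrow> 'a::field \<Rightarrow> 'a \<Rightarrow> nat \<Rightarrow> 'a ^3^3" where
  "rep_C3 q \<xi> \<alpha> l = vector [vector [1, \<xi> ^ (l * (q - 1)), \<alpha>],
                               vector [0, 1, - inverse (\<xi> ^ (l * (q - 1)))],
                               vector [0, 0, 1]]"

definition C3_class :: "nat \<Rightarrow> 'a::field \<Rightarrow> 'a \<Rightarrow> nat \<Rightarrow> ('a ^3^3) set" where
  "C3_class q \<xi> \<alpha> l = conj_class (SU3 q) (rep_C3 q \<xi> \<alpha> l)"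

end

(*
  Let u0 be the representative of the class and call g in SU3(q) good if g u0 g^-1 lies in
  the connected component of u0 in the Killing graph. Conjugation is a graph automorphism,
  so good elements are closed under multiplication, and the graph is connected once every
  element is good. Every unitriangular g = U(a, b) is good, because g u0 g^-1 commutes with u0.
  The Weyl element W is good: a unitriangular conjugation moves u0 to u1 = U(A, -2 - 3 w),
  w a primitive cube root of unity (it exists since q = 2 mod 3), and u1 is adjacent to
  W u1 W^-1, as an explicit member of the class centralises their product. Finally SU3(q) is
  generated by the unitriangular elements and W: the Bruhat decomposition reduces everything
  to the Borel subgroup, and a torus element is a product of three unitriangular elements
  interleaved with W, whose parameters exist because the norm F_q^2 -> F_q is surjective.
*)
theory Submission
  imports Defs "HOL-Algebra.Multiplicative_Group" "HOL-Computational_Algebra.Primes"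
begin

section \<open>Finite fields\<close>

text \<open>Lagrange's theorem in these two groups gives \<open>x ^ (CARD('a) - 1) = 1\<close> for \<open>x \<noteq> 0\<close>
  and \<open>of_nat CARD('a) = 0\<close>.\<close>

definition field_mult_monoid :: "'a::field monoid" where
  "field_mult_monoid = \<lparr>carrier = UNIV - {0}, mult = (*), one = 1\<rparr>"

definition field_add_monoid :: "'a::field monoid" where
  "field_add_monoid = \<lparr>carrier = UNIV, mult = (+), one = 0\<rparr>"

lemma group_field_mult_monoid: "group (field_mult_monoid :: 'a::field monoid)"
proof (rule groupI)
  show "\<exists>y\<in>carrier field_mult_monoid. y \<otimes>\<^bsub>field_mult_monoid\<^esub> x = \<one>\<^bsub>field_mult_monoid\<^esub>"
    if "x \<in> carrier field_mult_monoid" for x :: 'a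
    using that by (intro bexI[of _ "inverse x"]) (auto simp: field_mult_monoid_def)
qed (auto simp: field_mult_monoid_def)

lemma group_field_add_monoid: "group (field_add_monoid :: 'a::field monoid)"
  by (rule groupI) (auto simp: field_add_monoid_def add.assoc intro: exI[of _ "- x" for x])

lemma pow_field_mult_monoid: "x [^]\<^bsub>field_mult_monoid\<^esub> n = (x::'a::field) ^ n"
  by (induction n) (simp_all add: field_mult_monoid_def)

lemma pow_field_add_monoid: "x [^]\<^bsub>field_add_monoid\<^esub> n = of_nat n * (x::'a::field)"
  by (induction n) (simp_all add: field_add_monoid_def algebra_simps)

lemma finite_field_power_card_minus_one:
  fixes x :: "'a::{field,finite}"
  assumes "x \<noteq> 0"
  shows "x ^ (CARD('a) - 1) = 1"
proof -
  have "x [^]\<^bsub>field_mult_monoid\<^esub> order (field_mult_monoid :: 'a monoid) = \<one>\<^bsub>field_mult_monoid\<^esub>"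
    using assms by (intro group.pow_order_eq_1[OF group_field_mult_monoid])
      (simp add: field_mult_monoid_def)
  then show ?thesis
    unfolding pow_field_mult_monoid
    by (simp add: order_def field_mult_monoid_def card_Diff_singleton)
qed

lemma finite_field_power_card: "x ^ CARD('a) = (x::'a::{field,finite})"
proof -
  have "x ^ CARD('a) = x ^ Suc (CARD('a) - 1)"
    by (simp add: finite_UNIV_card_ge_0)
  also have "\<dots> = x * x ^ (CARD('a) - 1)"
    by (rule power_Suc)
  also have "\<dots> = x"
    using finite_field_power_card_minus_one[of x] by (cases "x = 0") simp_all
  finally show ?thesis .
qed

lemma finite_field_of_nat_card: "of_nat CARD('a) = (0::'a::{field,finite})"
proof -
  have "(1::'a) [^]\<^bsub>field_add_monoid\<^esub> order (field_add_monoid :: 'a monoid) = \<one>\<^bsub>field_add_monoid\<^esub>"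
    by (intro group.pow_order_eq_1[OF group_field_add_monoid]) (simp add: field_add_monoid_def)
  then show ?thesis
    unfolding pow_field_add_monoid by (simp add: order_def field_add_monoid_def)
qed

lemma finite_field_CHAR:
  assumes "prime p" and "CARD('a::{field,finite}) = p ^ k"
  shows "CHAR('a) = p"
proof -
  have "prime CHAR('a)"
    by (simp add: prime_CHAR_semidom finite_imp_CHAR_pos)
  moreover have "CHAR('a) dvd p ^ k"
    using finite_field_of_nat_card[where 'a='a] of_nat_eq_0_iff_char_dvd assms(2) by metis
  ultimately show ?thesis
    using assms(1) by (meson prime_dvd_power primes_dvd_imp_eq)
qed

lemma prime_power_ge_two:
  assumes "prime_power q"
  shows "2 \<le> q"
proof -
  obtain p k where "prime p" and "0 < k" and "q = p ^ k"
    using assms unfolding prime_power_def by blast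
  then show ?thesis
    using prime_ge_2_nat[of p] self_le_power[of p k] by simp
qed

lemma frobenius_add:
  assumes "prime_power q" and "CARD('a::{field,finite}) = q ^ 2"
  shows "(x + y) ^ q = x ^ q + (y::'a) ^ q"
proof -
  obtain p k where "prime p" and "q = p ^ k"
    using assms(1) unfolding prime_power_def by blast
  moreover from this have "CHAR('a) = p"
    using assms(2) by (intro finite_field_CHAR) (simp_all add: power_mult[symmetric])
  ultimately show ?thesis
    by (intro freshmans_dream') simp_all
qed

lemma frobenius_frobenius:
  assumes "CARD('a::{field,finite}) = q ^ 2"
  shows "(x ^ q) ^ q = (x::'a)"
  using finite_field_power_card[of x] assms by (simp add: power2_eq_square power_mult)

lemma power_mod_period:
  fixes x :: "'a::monoid_mult"
  assumes "x ^ d = 1"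
  shows "x ^ n = x ^ (n mod d)"
proof -
  have "x ^ n = x ^ (d * (n div d) + n mod d)"
    by simp
  also have "\<dots> = (x ^ d) ^ (n div d) * x ^ (n mod d)"
    by (simp only: power_add power_mult)
  finally show ?thesis
    using assms by simp
qed

definition mult_generator :: "'a::field \<Rightarrow> bool" where
  "mult_generator \<xi> \<longleftrightarrow> (\<forall>x. x \<noteq> 0 \<longrightarrow> (\<exists>n. x = \<xi> ^ n))"

lemma generator_nonzero:
  fixes \<xi> :: "'a::{field,finite}"
  assumes gen: "mult_generator \<xi>" and "2 < CARD('a)"
  shows "\<xi> \<noteq> 0"
proof
  assume "\<xi> = 0"
  then have "UNIV \<subseteq> {0, 1::'a}"
    using gen by (auto simp: mult_generator_def power_0_left split: if_splits)
  then have "CARD('a) \<le> card {0, 1::'a}"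
    by (rule card_mono[rotated]) simp
  then show False
    using assms(2) by simp
qed

lemma generator_period_ge:
  fixes \<xi> :: "'a::{field,finite}"
  assumes gen: "mult_generator \<xi>"
    and "0 < d" and "\<xi> ^ d = 1"
  shows "CARD('a) - 1 \<le> d"
proof -
  have "UNIV - {0} \<subseteq> (\<lambda>n. \<xi> ^ n) ` {..<d}"
  proof
    fix x :: 'a
    assume "x \<in> UNIV - {0}"
    then obtain n where "x = \<xi> ^ n"
      using gen by (auto simp: mult_generator_def)
    also have "\<dots> = \<xi> ^ (n mod d)"
      using assms(3) by (rule power_mod_period)
    finally show "x \<in> (\<lambda>n. \<xi> ^ n) ` {..<d}"
      using assms(2) by simp
  qed
  then have "card (UNIV - {0::'a}) \<le> card ((\<lambda>n. \<xi> ^ n) ` {..<d})"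
    by (rule card_mono[rotated]) simp
  also have "\<dots> \<le> d"
    using card_image_le[of "{..<d}" "\<lambda>n. \<xi> ^ n"] by simp
  finally show ?thesis
    by (simp add: card_Diff_singleton)
qed

lemma generator_power_eq_one_iff:
  fixes \<xi> :: "'a::{field,finite}"
  assumes gen: "mult_generator \<xi>" and "\<xi> \<noteq> 0"
  shows "\<xi> ^ m = 1 \<longleftrightarrow> (CARD('a) - 1) dvd m"
proof
  define N where "N = CARD('a) - 1"
  assume "\<xi> ^ m = 1"
  have "card {0, 1::'a} \<le> CARD('a)"
    by (rule card_mono) simp_all
  then have "0 < N"
    by (simp add: N_def)
  have "\<xi> ^ (m mod N) = 1"
    using power_mod_period[OF finite_field_power_card_minus_one[OF assms(2)], of m] \<open>\<xi> ^ m = 1\<close>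
    by (simp add: N_def)
  moreover have "m mod N < N"
    using \<open>0 < N\<close> by simp
  ultimately have "m mod N = 0"
    using generator_period_ge[OF gen, of "m mod N"] unfolding N_def by linarith
  then show "N dvd m"
    by (simp add: mod_eq_0_iff_dvd)
next
  assume "(CARD('a) - 1) dvd m"
  then show "\<xi> ^ m = 1"
    using power_mod_period[OF finite_field_power_card_minus_one[OF assms(2)], of m]
    by (simp add: mod_eq_0_iff_dvd)
qed

lemma norm_surjective:
  fixes \<xi> c :: "'a::{field,finite}"
  assumes gen: "mult_generator \<xi>" and "\<xi> \<noteq> 0"
    and card: "CARD('a) = q ^ 2" and "c ^ q = c"
  shows "\<exists>a. a ^ q * a = c"
proof -
  have "card {0, 1::'a} \<le> q ^ 2"
    unfolding card[symmetric] by (rule card_mono) simp_all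
  then have "2 \<le> q"
    using power_le_one[of q 2] by (cases "q \<le> 1") auto
  show ?thesis
  proof (cases "c = 0")
    case True
    then show ?thesis
      using \<open>2 \<le> q\<close> by (intro exI[of _ 0]) simp
  next
    case False
    then obtain n where n: "c = \<xi> ^ n"
      using gen by (auto simp: mult_generator_def)
    have "c * c ^ (q - 1) = c ^ Suc (q - 1)"
      by (rule power_Suc[symmetric])
    also have "\<dots> = c * 1"
      using \<open>c ^ q = c\<close> \<open>2 \<le> q\<close> by (simp add: Suc_diff_1)
    finally have "c ^ (q - 1) = 1"
      using False by simp
    then have "\<xi> ^ (n * (q - 1)) = 1"
      unfolding n by (simp add: power_mult)
    then have "(q - 1) * (q + 1) dvd (q - 1) * n"
      using generator_power_eq_one_iff[OF gen assms(2)] card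
      by (simp add: power2_eq_square algebra_simps)
    moreover have "0 < q - 1"
      using \<open>2 \<le> q\<close> by simp
    ultimately have "q + 1 dvd n"
      by (simp only: nat_mult_dvd_cancel1)
    then obtain j where "n = (q + 1) * j" ..
    then have "(\<xi> ^ j) ^ q * \<xi> ^ j = c"
      using n by (simp add: power_mult[symmetric] power_add[symmetric] algebra_simps)
    then show ?thesis
      by blast
  qed
qed

lemma generator_power_norm:
  fixes \<xi> :: "'a::{field,finite}"
  assumes gen: "mult_generator \<xi>" and "\<xi> \<noteq> 0" and card: "CARD('a) = q ^ 2"
  shows "(\<xi> ^ (l * (q - 1))) ^ q * \<xi> ^ (l * (q - 1)) = 1"
proof -
  have "CARD('a) - 1 = (q - 1) * (q + 1)"
    using card by (cases q) (simp_all add: power2_eq_square algebra_simps)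
  have "(\<xi> ^ (l * (q - 1))) ^ q * \<xi> ^ (l * (q - 1)) = \<xi> ^ (l * (q - 1) * q + l * (q - 1))"
    by (simp only: power_add power_mult)
  also have "\<dots> = \<xi> ^ (l * (CARD('a) - 1))"
    unfolding \<open>CARD('a) - 1 = _\<close> by (simp only: distrib_left mult.assoc mult_1_right)
  also have "\<dots> = 1"
    by (simp add: generator_power_eq_one_iff[OF gen assms(2)])
  finally show ?thesis .
qed

lemma cube_root_of_unity_exists:
  fixes \<xi> :: "'a::{field,finite}"
  assumes gen: "mult_generator \<xi>" and "\<xi> \<noteq> 0"
    and card: "CARD('a) = q ^ 2" and "q mod 3 = 2"
  shows "\<exists>\<omega>::'a. \<omega> ^ 2 + \<omega> + 1 = 0 \<and> \<omega> ^ q = \<omega> ^ 2"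
proof -
  obtain m where q: "q = 3 * m + 2"
    using \<open>q mod 3 = 2\<close> by (metis mod_div_mult_eq add.commute mult.commute)
  define t where "t = 3 * m * m + 4 * m + 1"
  have N: "CARD('a) - 1 = 3 * t"
    by (simp add: card q t_def power2_eq_square algebra_simps)
  define \<omega> where "\<omega> = \<xi> ^ t"
  have "\<omega> ^ 3 = 1"
    unfolding \<omega>_def power_mult[symmetric] generator_power_eq_one_iff[OF gen assms(2)] N by simp
  moreover have "\<omega> \<noteq> 1"
    unfolding \<omega>_def generator_power_eq_one_iff[OF gen assms(2)] N
    using nat_dvd_not_less[of t "3 * t"] by (simp add: t_def)
  moreover have "(\<omega> - 1) * (\<omega> ^ 2 + \<omega> + 1) = \<omega> ^ 3 - 1"
    by (simp add: algebra_simps power2_eq_square power3_eq_cube)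
  ultimately have "\<omega> ^ 2 + \<omega> + 1 = 0"
    by simp
  moreover have "\<omega> ^ q = \<omega> ^ 2"
    using power_mod_period[OF \<open>\<omega> ^ 3 = 1\<close>, of q] \<open>q mod 3 = 2\<close> by simp
  ultimately show ?thesis
    by blast
qed

section \<open>Matrix groups and the Killing graph\<close>

lemma matrix_inv_right: "invertible A \<Longrightarrow> A ** matrix_inv A = mat 1"
  and matrix_inv_left: "invertible A \<Longrightarrow> matrix_inv A ** A = mat 1"
  unfolding invertible_def matrix_inv_def by (metis (mono_tags, lifting) someI_ex)+

lemma matrix_inv_eqI:
  fixes A :: "'a::field^'n^'n"
  assumes "A ** B = mat 1"
  shows "matrix_inv A = B"
proof -
  have "invertible A"
    using assms invertible_right_inverse by blast
  have "matrix_inv A = matrix_inv A ** (A ** B)"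
    by (simp add: assms)
  also have "\<dots> = (matrix_inv A ** A) ** B"
    by (simp add: matrix_mul_assoc)
  also have "\<dots> = B"
    by (simp add: matrix_inv_left[OF \<open>invertible A\<close>])
  finally show ?thesis .
qed

lemma matrix_inv_mult:
  fixes A B :: "'a::field^'n^'n"
  assumes "invertible A" and "invertible B"
  shows "matrix_inv (A ** B) = matrix_inv B ** matrix_inv A"
proof (rule matrix_inv_eqI)
  have "A ** B ** (matrix_inv B ** matrix_inv A) = A ** (B ** matrix_inv B) ** matrix_inv A"
    by (simp add: matrix_mul_assoc)
  then show "A ** B ** (matrix_inv B ** matrix_inv A) = mat 1"
    by (simp add: matrix_inv_right assms)
qed

lemma matrix_inv_matrix_inv:
  fixes A :: "'a::field^'n^'n"
  shows "invertible A \<Longrightarrow> matrix_inv (matrix_inv A) = A"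
  by (intro matrix_inv_eqI matrix_inv_left)

definition matrix_conj :: "'a::semiring_1^'n^'n \<Rightarrow> 'a^'n^'n \<Rightarrow> 'a^'n^'n" where
  "matrix_conj g x = g ** x ** matrix_inv g"

lemma matrix_conj_mult:
  fixes g h :: "'a::field^'n^'n"
  assumes "invertible g" and "invertible h"
  shows "matrix_conj (g ** h) x = matrix_conj g (matrix_conj h x)"
  by (simp add: matrix_conj_def matrix_inv_mult assms matrix_mul_assoc)

lemma matrix_conj_matrix_mul:
  assumes "invertible g"
  shows "matrix_conj g x ** matrix_conj g y = matrix_conj g (x ** y)"
proof -
  have "matrix_conj g x ** matrix_conj g y = g ** x ** (matrix_inv g ** g) ** y ** matrix_inv g"
    by (simp add: matrix_conj_def matrix_mul_assoc)
  then show ?thesis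
    by (simp add: matrix_conj_def matrix_inv_left assms matrix_mul_assoc)
qed

lemma matrix_conj_cancel:
  assumes "invertible g"
  shows "matrix_inv g ** matrix_conj g x ** g = x"
proof -
  have "matrix_inv g ** matrix_conj g x ** g = (matrix_inv g ** g) ** x ** (matrix_inv g ** g)"
    by (simp add: matrix_conj_def matrix_mul_assoc)
  then show ?thesis
    by (simp add: matrix_inv_left assms)
qed

lemma matrix_conj_inj:
  assumes "invertible g" and "matrix_conj g x = matrix_conj g y"
  shows "x = y"
  by (metis assms matrix_conj_cancel)

lemma matrix_conj_eqI:
  assumes "invertible g" and "y ** g = g ** x"
  shows "matrix_conj g x = y"
proof -
  have "matrix_conj g x = y ** (g ** matrix_inv g)"
    by (simp add: matrix_conj_def assms(2) matrix_mul_assoc)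
  then show ?thesis
    by (simp add: matrix_inv_right assms(1))
qed

lemma killing_graph_iff:
  assumes "C \<subseteq> G"
  shows "(a, b) \<in> killing_graph G C \<longleftrightarrow>
    a \<in> C \<and> b \<in> C \<and> a \<noteq> b \<and> (\<exists>c\<in>C. c ** (a ** b) = (a ** b) ** c)"
  using assms unfolding killing_graph_def centralizer_in_def by blast

definition component_stabilizer :: "('a::field^3^3) set \<Rightarrow> 'a^3^3 \<Rightarrow> ('a^3^3) set" where
  "component_stabilizer G x =
    {g \<in> G. (x, matrix_conj g x) \<in> (killing_graph G (conj_class G x))\<^sup>*}"

locale matrix_group =
  fixes G :: "('a::field^3^3) set"
  assumes one_mem: "mat 1 \<in> G"
    and mult_mem: "g \<in> G \<Longrightarrow> h \<in> G \<Longrightarrow> g ** h \<in> G"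
    and inv_mem: "g \<in> G \<Longrightarrow> matrix_inv g \<in> G"
    and invertible_mem: "g \<in> G \<Longrightarrow> invertible g"
begin

lemma mem_conj_class_iff: "y \<in> conj_class G x \<longleftrightarrow> (\<exists>g\<in>G. y = matrix_conj g x)"
  unfolding conj_class_def matrix_conj_def by blast

lemma conj_class_subset: "x \<in> G \<Longrightarrow> conj_class G x \<subseteq> G"
  unfolding conj_class_def by (auto intro: mult_mem inv_mem)

lemma self_mem_conj_class: "x \<in> conj_class G x"
  using one_mem mem_conj_class_iff[of x x]
  by (metis invertible_mem matrix_conj_eqI matrix_mul_lid matrix_mul_rid)

lemma matrix_conj_mem_conj_class:
  assumes "y \<in> conj_class G x" and "h \<in> G"
  shows "matrix_conj h y \<in> conj_class G x"
  using assms by (auto simp: mem_conj_class_iff invertible_mem simp flip: matrix_conj_mult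
      intro: mult_mem)

context
  fixes x
  assumes x_mem: "x \<in> G"
begin

lemma killing_graph_matrix_conj:
  assumes "(a, b) \<in> killing_graph G (conj_class G x)" and "h \<in> G"
  shows "(matrix_conj h a, matrix_conj h b) \<in> killing_graph G (conj_class G x)"
proof -
  obtain c where "a \<in> conj_class G x" "b \<in> conj_class G x" "a \<noteq> b"
    and c: "c \<in> conj_class G x" "c ** (a ** b) = (a ** b) ** c"
    using assms(1) killing_graph_iff[OF conj_class_subset[OF x_mem]] by blast
  moreover have "matrix_conj h c ** (matrix_conj h a ** matrix_conj h b) =
      (matrix_conj h a ** matrix_conj h b) ** matrix_conj h c"
    using c(2) by (simp add: matrix_conj_matrix_mul invertible_mem assms(2))
  moreover have "matrix_conj h a \<noteq> matrix_conj h b"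
    using \<open>a \<noteq> b\<close> matrix_conj_inj invertible_mem assms(2) by blast
  ultimately show ?thesis
    using killing_graph_iff[OF conj_class_subset[OF x_mem]] matrix_conj_mem_conj_class assms(2)
    by blast
qed

text \<open>Conjugating by \<open>a\<inverse>\<close> turns \<open>a b\<close> into \<open>b a\<close>.\<close>
lemma sym_killing_graph: "sym (killing_graph G (conj_class G x))"
proof (rule symI)
  fix a b
  assume "(a, b) \<in> killing_graph G (conj_class G x)"
  then obtain c where "a \<in> conj_class G x" "b \<in> conj_class G x" "a \<noteq> b"
    and c: "c \<in> conj_class G x" "c ** (a ** b) = (a ** b) ** c"
    using killing_graph_iff[OF conj_class_subset[OF x_mem]] by blast
  then have "a \<in> G"
    using conj_class_subset[OF x_mem] by blast
  let ?h = "matrix_inv a"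
  have "matrix_conj ?h (a ** b) = (?h ** a) ** b ** a"
    by (simp add: matrix_conj_def matrix_inv_matrix_inv invertible_mem \<open>a \<in> G\<close> matrix_mul_assoc)
  then have "matrix_conj ?h (a ** b) = b ** a"
    by (simp add: matrix_inv_left invertible_mem \<open>a \<in> G\<close>)
  then have "matrix_conj ?h c ** (b ** a) = (b ** a) ** matrix_conj ?h c"
    using c(2) invertible_mem inv_mem \<open>a \<in> G\<close> by (metis matrix_conj_matrix_mul)
  then show "(b, a) \<in> killing_graph G (conj_class G x)"
    using killing_graph_iff[OF conj_class_subset[OF x_mem]] \<open>a \<in> conj_class G x\<close>
      \<open>b \<in> conj_class G x\<close> \<open>a \<noteq> b\<close> matrix_conj_mem_conj_class[OF c(1) inv_mem[OF \<open>a \<in> G\<close>]]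
    by blast
qed

lemma rtrancl_killing_graph_matrix_conj:
  assumes "(a, b) \<in> (killing_graph G (conj_class G x))\<^sup>*" and "h \<in> G"
  shows "(matrix_conj h a, matrix_conj h b) \<in> (killing_graph G (conj_class G x))\<^sup>*"
  using assms(1)
proof (induction rule: rtrancl_induct)
  case (step b c)
  then show ?case
    using killing_graph_matrix_conj[OF _ assms(2)] by (meson rtrancl.rtrancl_into_rtrancl)
qed simp

lemma component_stabilizer_mult:
  assumes "g \<in> component_stabilizer G x" and "h \<in> component_stabilizer G x"
  shows "g ** h \<in> component_stabilizer G x"
proof -
  have "g \<in> G" "h \<in> G"
    using assms by (simp_all add: component_stabilizer_def)
  have "(matrix_conj g x, matrix_conj g (matrix_conj h x)) \<in> (killing_graph G (conj_class G x))\<^sup>*"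
    using assms(2) \<open>g \<in> G\<close> by (intro rtrancl_killing_graph_matrix_conj) (simp add: component_stabilizer_def)
  then show ?thesis
    using assms \<open>g \<in> G\<close> \<open>h \<in> G\<close>
    by (auto simp: component_stabilizer_def matrix_conj_mult invertible_mem intro: mult_mem)
qed

lemma mem_component_stabilizer_if_commute:
  assumes "g \<in> G" and "matrix_conj g x ** x = x ** matrix_conj g x"
  shows "g \<in> component_stabilizer G x"
proof (cases "matrix_conj g x = x")
  case False
  have "x ** (x ** matrix_conj g x) = (x ** matrix_conj g x) ** x"
    by (simp add: assms(2) flip: matrix_mul_assoc)
  then have "(x, matrix_conj g x) \<in> killing_graph G (conj_class G x)"
    using False killing_graph_iff[OF conj_class_subset[OF x_mem]] self_mem_conj_class
      mem_conj_class_iff assms(1) by metis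
  then show ?thesis
    using assms(1) by (simp add: component_stabilizer_def)
qed (simp add: component_stabilizer_def assms(1))

lemma killing_irreducible_if_component_stabilizer:
  assumes "G \<subseteq> component_stabilizer G x"
  shows "killing_irreducible G (conj_class G x)"
  unfolding killing_irreducible_def
proof (intro conjI ballI)
  show "conj_class G x \<noteq> {}"
    using self_mem_conj_class by blast
  fix a b
  assume "a \<in> conj_class G x" "b \<in> conj_class G x"
  then obtain g h where "g \<in> G" "h \<in> G" "a = matrix_conj g x" "b = matrix_conj h x"
    using mem_conj_class_iff by blast
  then have "(x, a) \<in> (killing_graph G (conj_class G x))\<^sup>*"
    and "(x, b) \<in> (killing_graph G (conj_class G x))\<^sup>*"
    using assms by (auto simp: component_stabilizer_def)
  then show "(a, b) \<in> (killing_graph G (conj_class G x))\<^sup>*"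
    using sym_rtrancl[OF sym_killing_graph] by (meson rtrancl_trans symD)
qed

end

end

section \<open>The group \<open>SU\<^sub>3(q)\<close>\<close>

definition mat3 :: "'a::zero \<Rightarrow> 'a \<Rightarrow> 'a \<Rightarrow> 'a \<Rightarrow> 'a \<Rightarrow> 'a \<Rightarrow> 'a \<Rightarrow> 'a \<Rightarrow> 'a \<Rightarrow> 'a^3^3" where
  "mat3 a b c d e f g h i = vector [vector [a, b, c], vector [d, e, f], vector [g, h, i]]"

lemma mat3_nth [simp]:
  "mat3 a b c d e f g h i $ 1 $ 1 = a" "mat3 a b c d e f g h i $ 1 $ 2 = b"
  "mat3 a b c d e f g h i $ 1 $ 3 = c" "mat3 a b c d e f g h i $ 2 $ 1 = d"
  "mat3 a b c d e f g h i $ 2 $ 2 = e" "mat3 a b c d e f g h i $ 2 $ 3 = f"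
  "mat3 a b c d e f g h i $ 3 $ 1 = g" "mat3 a b c d e f g h i $ 3 $ 2 = h"
  "mat3 a b c d e f g h i $ 3 $ 3 = i"
  by (simp_all add: mat3_def)

lemma mat3_entries:
  "(M::'a::zero^3^3) =
    mat3 (M$1$1) (M$1$2) (M$1$3) (M$2$1) (M$2$2) (M$2$3) (M$3$1) (M$3$2) (M$3$3)"
  by (simp add: vec_eq_iff forall_3)

lemma mat3_eq_iff:
  "mat3 a b c d e f g h i = mat3 a' b' c' d' e' f' g' h' i' \<longleftrightarrow>
    a = a' \<and> b = b' \<and> c = c' \<and> d = d' \<and> e = e' \<and> f = f' \<and> g = g' \<and> h = h' \<and> i = i'"
  by (auto simp: vec_eq_iff forall_3)

lemma mat3_mult:
  "mat3 a b c d e f g h i ** mat3 a' b' c' d' e' f' g' h' i' =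
    mat3 (a*a' + b*d' + c*g') (a*b' + b*e' + c*h') (a*c' + b*f' + c*i')
         (d*a' + e*d' + f*g') (d*b' + e*e' + f*h') (d*c' + e*f' + f*i')
         (g*a' + h*d' + i*g') (g*b' + h*e' + i*h') (g*c' + h*f' + i*i')"
  by (simp add: vec_eq_iff forall_3 matrix_matrix_mult_def sum_3)

lemma mat_one_mat3: "(mat 1 :: 'a::{zero,one}^3^3) = mat3 1 0 0 0 1 0 0 0 1"
  by (simp add: vec_eq_iff forall_3 mat_def)

lemma conj_star_mat3:
  "conj_star q (mat3 a b c d e f g h i) =
    mat3 (a^q) (d^q) (g^q) (b^q) (e^q) (h^q) (c^q) (f^q) (i^q)"
  by (simp add: conj_star_def vec_eq_iff forall_3 transpose_def)

lemma Jmat_mat3: "Jmat = mat3 0 0 1 0 1 0 1 0 0"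
  by (simp add: Jmat_def mat3_def)

lemma SU3_mat3_iff:
  "(mat3 a b c d e f g h i :: 'a::field^3^3) \<in> SU3 q \<longleftrightarrow>
    a*e*i + b*f*g + c*d*h - a*f*h - b*d*i - c*e*g = 1 \<and>
    g^q*a + d^q*d + a^q*g = 0 \<and> g^q*b + d^q*e + a^q*h = 0 \<and> g^q*c + d^q*f + a^q*i = 1 \<and>
    h^q*a + e^q*d + b^q*g = 0 \<and> h^q*b + e^q*e + b^q*h = 1 \<and> h^q*c + e^q*f + b^q*i = 0 \<and>
    i^q*a + f^q*d + c^q*g = 1 \<and> i^q*b + f^q*e + c^q*h = 0 \<and> i^q*c + f^q*f + c^q*i = 0"
  by (simp add: SU3_def det_3 conj_star_mat3 Jmat_mat3 mat3_mult mat3_eq_iff)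

locale involutive_frobenius =
  fixes q :: nat
  assumes frob_add: "((x::'a::field) + y) ^ q = x ^ q + y ^ q"
    and frob_frob: "((x::'a) ^ q) ^ q = x"
begin

lemma q_pos: "0 < q"
  using frob_frob[of 0] by (cases q) auto

lemma frob_zero [simp]: "(0::'a) ^ q = 0"
  using q_pos by simp

lemma frob_neg [simp]: "(- x::'a) ^ q = - (x ^ q)"
  using frob_add[of x "- x"] by (simp add: eq_neg_iff_add_eq_0 add.commute)

lemma frob_diff [simp]: "(x - y::'a) ^ q = x ^ q - y ^ q"
  using frob_add[of x "- y"] by simp

lemma frob_of_nat [simp]: "(of_nat n::'a) ^ q = of_nat n"
  by (induction n) (simp_all add: frob_add)

lemma frob_numeral [simp]: "(numeral n::'a) ^ q = numeral n"
  using frob_of_nat[of "numeral n"] by simp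

lemma frob_sum: "(sum f A) ^ q = (\<Sum>i\<in>A. (f i::'a) ^ q)"
  by (induction A rule: infinite_finite_induct) (simp_all add: frob_add)

lemma conj_star_mult: "conj_star q (X ** Y) = conj_star q Y ** conj_star q (X::'a^3^3)"
  by (simp add: conj_star_def matrix_matrix_mult_def transpose_def vec_eq_iff frob_sum
      power_mult_distrib mult.commute)

lemma conj_star_one: "conj_star q (mat 1::'a^3^3) = mat 1"
  by (simp add: conj_star_def mat_def transpose_def vec_eq_iff)

lemma SU3_mult_mem:
  fixes X Y :: "'a^3^3"
  assumes "X \<in> SU3 q" and "Y \<in> SU3 q"
  shows "X ** Y \<in> SU3 q"
proof -
  have "conj_star q (X ** Y) ** Jmat ** (X ** Y) = conj_star q Y ** (conj_star q X ** Jmat ** X) ** Y"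
    by (simp add: conj_star_mult matrix_mul_assoc)
  also have "\<dots> = Jmat"
    using assms unfolding SU3_def by simp
  finally show ?thesis
    using assms unfolding SU3_def by (simp add: det_mul)
qed

lemma SU3_invertible: "(X::'a^3^3) \<in> SU3 q \<Longrightarrow> invertible X"
  by (simp add: SU3_def invertible_det_nz)

lemma SU3_inv_mem:
  fixes X :: "'a^3^3"
  assumes "X \<in> SU3 q"
  shows "matrix_inv X \<in> SU3 q"
proof -
  let ?Y = "matrix_inv X"
  have XY: "X ** ?Y = mat 1"
    by (simp add: matrix_inv_right SU3_invertible assms)
  then have "det X * det ?Y = 1"
    by (metis det_I det_mul)
  then have "det ?Y = 1"
    using assms by (simp add: SU3_def)
  have "conj_star q ?Y ** conj_star q X = mat 1"
    using conj_star_mult[of X ?Y] XY by (simp add: conj_star_one)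
  then have "conj_star q ?Y ** Jmat ** ?Y = conj_star q ?Y ** (conj_star q X ** Jmat ** X) ** ?Y"
    using assms XY by (simp add: SU3_def)
  also have "\<dots> = (conj_star q ?Y ** conj_star q X) ** Jmat ** (X ** ?Y)"
    by (simp add: matrix_mul_assoc)
  also have "\<dots> = Jmat"
    using \<open>conj_star q ?Y ** conj_star q X = mat 1\<close> XY by simp
  finally show ?thesis
    using \<open>det ?Y = 1\<close> by (simp add: SU3_def)
qed

sublocale SU3: matrix_group "SU3 q :: ('a^3^3) set"
proof
  show "(mat 1 :: 'a^3^3) \<in> SU3 q"
    by (simp add: SU3_def conj_star_one)
qed (simp_all add: SU3_mult_mem SU3_inv_mem SU3_invertible)

end

definition weyl :: "'a::{zero,one,uminus}^3^3" where
  "weyl = mat3 0 0 1 0 (- 1) 0 1 0 0"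

lemma weyl_weyl: "weyl ** weyl = (mat 1 :: 'a::ring_1^3^3)"
  by (simp add: weyl_def mat_one_mat3 mat3_mult)

text \<open>The rank-one relation writing a torus element as a product of three root elements
  interleaved with the Weyl element.  \<open>Groebner_Basis.algebra\<close> is the HOL method of that
  name, which HOL-Algebra shadows.\<close>

lemma torus_weyl_unipotent_identity:
  fixes s t a b :: "'a::field"
  assumes "s \<noteq> 0" and "t \<noteq> 0" and "b * a = - (s + t)"
  shows "mat3 s 0 0 0 (t / s) 0 0 0 (1 / t) =
    weyl ** mat3 1 (a / t) (1 / t) 0 1 (- (b / s)) 0 0 1 ** weyl **
    mat3 1 a s 0 1 (- b) 0 0 1 ** weyl ** mat3 1 (a / s) (1 / t) 0 1 (- (b / t)) 0 0 1"
  using assms by (simp add: weyl_def mat3_mult mat3_eq_iff field_simps; Groebner_Basis.algebra)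

context involutive_frobenius
begin

definition unipotent :: "'a \<Rightarrow> 'a \<Rightarrow> 'a^3^3" where
  "unipotent a b = mat3 1 a b 0 1 (- (a ^ q)) 0 0 1"

definition torus :: "'a \<Rightarrow> 'a^3^3" where
  "torus s = mat3 s 0 0 0 (s ^ q / s) 0 0 0 (1 / s ^ q)"

lemma unipotent_mult: "unipotent a b ** unipotent c d = unipotent (a + c) (b + d - a * c ^ q)"
  by (simp add: unipotent_def mat3_mult mat3_eq_iff frob_add algebra_simps)

lemma unipotent_mem_iff: "unipotent a b \<in> SU3 q \<longleftrightarrow> b + b ^ q + a ^ q * a = 0"
  by (auto simp: unipotent_def SU3_mat3_iff frob_frob algebra_simps)

lemma matrix_inv_unipotent:
  assumes "unipotent a b \<in> SU3 q"
  shows "matrix_inv (unipotent a b) = unipotent (- a) (b ^ q)"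
  using assms unfolding unipotent_mem_iff
  by (intro matrix_inv_eqI, unfold unipotent_mult)
    (simp add: mat_one_mat3 unipotent_def mat3_eq_iff algebra_simps)

lemma unitriangular_SU3_eq_unipotent:
  assumes "mat3 1 a b 0 1 c 0 0 1 \<in> SU3 q"
  shows "mat3 1 a b 0 1 c 0 0 1 = unipotent a b"
  using assms by (simp add: unipotent_def SU3_mat3_iff mat3_eq_iff eq_neg_iff_add_eq_0)

lemma weyl_mem: "(weyl :: 'a^3^3) \<in> SU3 q"
  by (simp add: weyl_def SU3_mat3_iff)

lemma torus_mem: "s \<noteq> 0 \<Longrightarrow> torus s \<in> SU3 q"
  by (simp add: torus_def SU3_mat3_iff frob_frob power_divide)

lemma torus_factorization:
  assumes "s \<noteq> 0" and "a ^ q * a = - (s + s ^ q)"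
  shows "torus s = weyl ** unipotent (a / s ^ q) (1 / s ^ q) ** weyl ** unipotent a s **
      weyl ** unipotent (a / s) (1 / s ^ q)"
  using torus_weyl_unipotent_identity[of s "s ^ q" "a ^ q" a] assms
  by (simp add: torus_def unipotent_def power_divide frob_frob)

lemma torus_mult_torus_inverse: "s \<noteq> 0 \<Longrightarrow> torus s ** torus (1 / s) = mat 1"
  by (simp add: torus_def mat_one_mat3 mat3_mult power_divide)

lemma borel_factorization:
  assumes "M \<in> SU3 q" and "M $ 3 $ 1 = 0"
  obtains s a b where "s \<noteq> 0" and "unipotent a b \<in> SU3 q" and "M = torus s ** unipotent a b"
proof -
  obtain a b c d e f h i where M: "M = mat3 a b c d e f 0 h i"
    using mat3_entries[of M] assms(2) by metis
  have "d = 0"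
    using assms(1) unfolding M SU3_mat3_iff by auto
  have eqs: "a * e * i + c * d * h - a * f * h - b * d * i = 1"
    "d ^ q * e + a ^ q * h = 0" "d ^ q * f + a ^ q * i = 1"
    using assms(1) unfolding M SU3_mat3_iff by simp_all
  have "a * (e * i - f * h) = 1"
    using eqs(1) \<open>d = 0\<close> by (simp add: algebra_simps)
  then have "a \<noteq> 0"
    by auto
  then have "h = 0" and "i = 1 / a ^ q"
    using eqs(2,3) \<open>d = 0\<close> by (simp_all add: field_simps)
  then have "a * e / a ^ q = 1"
    using \<open>a * (e * i - f * h) = 1\<close> by simp
  then have "e = a ^ q / a"
    using \<open>a \<noteq> 0\<close> by (simp add: field_simps)
  define N where "N = torus (1 / a) ** M"
  have "N \<in> SU3 q"
    unfolding N_def using \<open>a \<noteq> 0\<close> assms(1) by (simp add: SU3.mult_mem torus_mem)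
  moreover have "N = mat3 1 (b / a) (c / a) 0 1 (a * f / a ^ q) 0 0 1"
    unfolding N_def M torus_def \<open>d = 0\<close> \<open>h = 0\<close> \<open>i = 1 / a ^ q\<close> \<open>e = a ^ q / a\<close>
    using \<open>a \<noteq> 0\<close> by (simp add: mat3_mult mat3_eq_iff power_divide field_simps)
  ultimately have "N = unipotent (b / a) (c / a)" and "N \<in> SU3 q"
    using unitriangular_SU3_eq_unipotent by simp_all
  moreover have "M = torus a ** N"
    unfolding N_def using torus_mult_torus_inverse[OF \<open>a \<noteq> 0\<close>] by (simp add: matrix_mul_assoc)
  ultimately show thesis
    using that \<open>a \<noteq> 0\<close> by simp
qed

lemma bruhat_factorization:
  assumes "M \<in> SU3 q" and "M $ 3 $ 1 \<noteq> 0"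
  obtains a b B where "unipotent a b \<in> SU3 q" and "B \<in> SU3 q" and "B $ 3 $ 1 = 0"
    and "M = unipotent a b ** weyl ** B"
proof -
  obtain a b c d e f g h i where M: "M = mat3 a b c d e f g h i"
    using mat3_entries[of M] by metis
  have "g \<noteq> 0"
    using assms(2) M by simp
  have orth: "g ^ q * a + d ^ q * d + a ^ q * g = 0"
    using assms(1) unfolding M SU3_mat3_iff by simp
  define U where "U = unipotent (- ((d / g) ^ q)) (a / g)"
  have "U \<in> SU3 q"
  proof -
    have "a / g + (a / g) ^ q + (- ((d / g) ^ q)) ^ q * - ((d / g) ^ q) =
        (g ^ q * a + d ^ q * d + a ^ q * g) / (g * g ^ q)"
      using \<open>g \<noteq> 0\<close> by (simp add: power_divide frob_frob field_simps)
    then show ?thesis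
      unfolding U_def unipotent_mem_iff using orth by simp
  qed
  define B where "B = weyl ** matrix_inv U ** M"
  have "B \<in> SU3 q"
    unfolding B_def using \<open>U \<in> SU3 q\<close> assms(1) weyl_mem by (simp add: SU3.mult_mem SU3.inv_mem)
  have "matrix_inv U = unipotent ((d / g) ^ q) ((a / g) ^ q)"
    using matrix_inv_unipotent[OF \<open>U \<in> SU3 q\<close>[unfolded U_def]] by (simp add: U_def)
  then have "B $ 3 $ 1 = (g ^ q * a + d ^ q * d + a ^ q * g) / g ^ q"
    unfolding B_def M weyl_def unipotent_def
    using \<open>g \<noteq> 0\<close> by (simp add: mat3_mult power_divide frob_frob field_simps)
  moreover note \<open>B \<in> SU3 q\<close>
  moreover have "M = U ** weyl ** B"
  proof -
    have "U ** weyl ** B = U ** (weyl ** weyl) ** matrix_inv U ** M"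
      by (simp add: B_def matrix_mul_assoc)
    also have "\<dots> = M"
      using \<open>U \<in> SU3 q\<close> by (simp add: weyl_weyl matrix_inv_right SU3_invertible)
    finally show ?thesis
      by simp
  qed
  ultimately show thesis
    using that \<open>U \<in> SU3 q\<close> orth unfolding U_def by simp
qed

lemma SU3_subset_if_unipotent_weyl:
  assumes norm_onto: "\<And>c::'a. c ^ q = c \<Longrightarrow> \<exists>a. a ^ q * a = c"
    and mult_mem: "\<And>g h. g \<in> H \<Longrightarrow> h \<in> H \<Longrightarrow> g ** h \<in> H"
    and unipotent_mem: "\<And>a b. unipotent a b \<in> SU3 q \<Longrightarrow> unipotent a b \<in> H"
    and weyl_mem: "weyl \<in> H"
  shows "SU3 q \<subseteq> H"
proof -
  have torus_mem: "torus s \<in> H" if "s \<noteq> 0" for s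
  proof -
    have "(- (s + s ^ q)) ^ q = - (s + s ^ q)"
      by (simp add: frob_add frob_frob add.commute)
    then obtain a where a: "a ^ q * a = - (s + s ^ q)"
      using norm_onto by blast
    have "1 / s ^ q + (1 / s ^ q) ^ q + (a / s ^ q) ^ q * (a / s ^ q) =
        (s + s ^ q + a ^ q * a) / (s * s ^ q)"
      and "1 / s ^ q + (1 / s ^ q) ^ q + (a / s) ^ q * (a / s) =
        (s + s ^ q + a ^ q * a) / (s * s ^ q)"
      using \<open>s \<noteq> 0\<close> by (simp_all add: power_divide frob_frob field_simps)
    then have "unipotent (a / s ^ q) (1 / s ^ q) \<in> SU3 q" "unipotent a s \<in> SU3 q"
      "unipotent (a / s) (1 / s ^ q) \<in> SU3 q"
      unfolding unipotent_mem_iff using a by simp_all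
    then show ?thesis
      unfolding torus_factorization[OF \<open>s \<noteq> 0\<close> a] by (simp add: mult_mem unipotent_mem weyl_mem)
  qed
  have borel_mem: "M \<in> H" if "M \<in> SU3 q" and "M $ 3 $ 1 = 0" for M :: "'a^3^3"
    using borel_factorization[OF that] torus_mem unipotent_mem mult_mem by metis
  show ?thesis
  proof
    fix M :: "'a^3^3"
    assume "M \<in> SU3 q"
    then show "M \<in> H"
      using borel_mem bruhat_factorization[of M] unipotent_mem weyl_mem mult_mem by metis
  qed
qed

lemma matrix_conj_unipotent:
  assumes "unipotent a b \<in> SU3 q"
  shows "matrix_conj (unipotent a b) (unipotent c d) = unipotent c (d + c * a ^ q - a * c ^ q)"
  using assms unfolding matrix_conj_def matrix_inv_unipotent[OF assms] unipotent_mult unipotent_mem_iff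
  by (simp add: unipotent_def mat3_eq_iff algebra_simps)

lemma unipotent_commute: "unipotent c d ** unipotent c e = unipotent c e ** unipotent c d"
  by (simp add: unipotent_mult add.commute)

lemma matrix_conj_weyl_unipotent:
  "matrix_conj weyl (unipotent c d) = mat3 1 0 0 (c ^ q) 1 0 d (- c) 1"
proof -
  have "matrix_inv (weyl :: 'a^3^3) = weyl"
    by (rule matrix_inv_eqI) (rule weyl_weyl)
  then show ?thesis
    by (simp add: matrix_conj_def weyl_def unipotent_def mat3_mult)
qed

end

lemma cube_root_witness_identity:
  fixes w a b :: "'a::field"
  assumes "w ^ 2 + w + 1 = 0" and "b * a = 1"
  shows "mat3 (w * (- 2 - 3 * w)) (- (w * a)) w (- (w * b)) (- w) 0 w 0 0 **
      mat3 1 0 0 (w ^ 2 * b) 1 0 w (- (w * a)) 1 =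
    mat3 1 0 0 (w ^ 2 * b) 1 0 w (- (w * a)) 1 ** mat3 1 a w 0 1 (- b) 0 0 1"
  using assms by (simp add: mat3_mult mat3_eq_iff; Groebner_Basis.algebra)

section \<open>Connectedness of the Killing graph of the class\<close>

text \<open>\<open>unipotent A \<alpha>\<close> is the representative of \<open>C\<^sub>3\<^sup>(\<^sup>0\<^sup>,\<^sup>l\<^sup>)\<close> for \<open>A = \<xi> ^ (l * (q - 1))\<close>:
  as \<open>A ^ (q + 1) = 1\<close>, its entry \<open>- inverse A\<close> equals \<open>- A ^ q\<close>.\<close>

locale C3_setting = involutive_frobenius q for q +
  fixes A \<alpha> \<omega> :: "'a::field"
  assumes A_norm: "A ^ q * A = 1"
    and alpha_trace: "\<alpha> + \<alpha> ^ q + 1 = 0"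
    and omega_cube_root: "\<omega> ^ 2 + \<omega> + 1 = 0"
    and omega_frob: "\<omega> ^ q = \<omega> ^ 2"
begin

abbreviation u0 :: "'a^3^3" where
  "u0 \<equiv> unipotent A \<alpha>"

lemma omega_cube: "\<omega> ^ 3 = 1"
proof -
  have "\<omega> ^ 3 - 1 = (\<omega> - 1) * (\<omega> ^ 2 + \<omega> + 1)"
    by (simp add: algebra_simps power2_eq_square power3_eq_cube)
  then show ?thesis
    using omega_cube_root by simp
qed

lemma u0_mem: "u0 \<in> SU3 q"
  using alpha_trace A_norm by (simp add: unipotent_mem_iff add.assoc)

lemma unipotent_mem_component_stabilizer:
  assumes "unipotent a b \<in> SU3 q"
  shows "unipotent a b \<in> component_stabilizer (SU3 q) u0"
proof -
  have "matrix_conj (unipotent a b) u0 = unipotent A (\<alpha> + A * a ^ q - a * A ^ q)"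
    using assms by (rule matrix_conj_unipotent)
  then show ?thesis
    using assms u0_mem unipotent_commute by (simp add: SU3.mem_component_stabilizer_if_commute)
qed

lemma unipotent_conjugate:
  assumes "\<beta> + \<beta> ^ q + 1 = 0"
  obtains a b where "unipotent a b \<in> SU3 q" and "matrix_conj (unipotent a b) u0 = unipotent A \<beta>"
proof -
  have alpha_q: "\<alpha> ^ q = - 1 - \<alpha>" and beta_q: "\<beta> ^ q = - 1 - \<beta>"
    using alpha_trace assms by (simp_all add: eq_neg_iff_add_eq_0 algebra_simps)
  define c where "c = \<alpha> * (\<beta> - \<alpha>) * A"
  define d where "d = \<alpha> * (c ^ q * c)"
  have "d + d ^ q + c ^ q * c = (\<alpha> + \<alpha> ^ q + 1) * (c ^ q * c)"
    unfolding d_def by (simp add: power_mult_distrib frob_frob algebra_simps)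
  then have "unipotent c d \<in> SU3 q"
    unfolding unipotent_mem_iff using alpha_trace by simp
  moreover have "\<alpha> + A * c ^ q - c * A ^ q = \<beta>"
  proof -
    have "\<alpha> + A * c ^ q - c * A ^ q = \<alpha> - (\<alpha> ^ q + \<alpha>) * (\<beta> - \<alpha>) * (A ^ q * A)"
      unfolding c_def by (simp add: power_mult_distrib alpha_q beta_q algebra_simps)
    then show ?thesis
      by (simp add: A_norm alpha_q)
  qed
  ultimately show thesis
    using that matrix_conj_unipotent by metis
qed

lemma unipotent_mem_conj_class:
  "\<beta> + \<beta> ^ q + 1 = 0 \<Longrightarrow> unipotent A \<beta> \<in> conj_class (SU3 q) u0"
  by (metis unipotent_conjugate SU3.mem_conj_class_iff)

lemma minus_two_minus_three_omega_trace: "(- 2 - 3 * \<omega>) + (- 2 - 3 * \<omega>) ^ q + 1 = 0"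
proof -
  have "(- 2 - 3 * \<omega>) + (- 2 - 3 * \<omega>) ^ q + 1 = - 3 * (\<omega> ^ 2 + \<omega> + 1)"
    by (simp add: omega_frob algebra_simps)
  then show ?thesis
    using omega_cube_root by simp
qed

text \<open>This element is the conjugate of \<open>unipotent A \<omega>\<close> by \<open>weyl ** unipotent (\<omega> * A) \<omega> ** weyl\<close>.\<close>
lemma weyl_edge_witness_mem:
  "mat3 (\<omega> * (- 2 - 3 * \<omega>)) (- (\<omega> * A)) \<omega> (- (\<omega> * A ^ q)) (- \<omega>) 0 \<omega> 0 0
    \<in> conj_class (SU3 q) u0"
proof -
  define L where "L = mat3 1 0 0 (\<omega> ^ 2 * A ^ q) 1 0 \<omega> (- (\<omega> * A)) 1"
  have "L = weyl ** unipotent (\<omega> * A) \<omega> ** weyl"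
    by (simp add: L_def weyl_def unipotent_def mat3_mult mat3_eq_iff power_mult_distrib omega_frob)
  moreover have "unipotent (\<omega> * A) \<omega> \<in> SU3 q"
  proof -
    have "\<omega> + \<omega> ^ q + (\<omega> * A) ^ q * (\<omega> * A) = \<omega> + \<omega> ^ 2 + \<omega> ^ 3 * (A ^ q * A)"
      by (simp add: power_mult_distrib omega_frob algebra_simps power2_eq_square power3_eq_cube)
    also have "\<dots> = \<omega> ^ 2 + \<omega> + 1"
      by (simp add: omega_cube A_norm)
    finally show ?thesis
      unfolding unipotent_mem_iff using omega_cube_root by simp
  qed
  ultimately have "L \<in> SU3 q"
    by (simp add: SU3.mult_mem weyl_mem)
  have "\<omega> + \<omega> ^ q + 1 = 0"
    using omega_cube_root omega_frob by (simp add: algebra_simps)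
  then have "matrix_conj L (unipotent A \<omega>) \<in> conj_class (SU3 q) u0"
    using \<open>L \<in> SU3 q\<close> by (simp add: unipotent_mem_conj_class SU3.matrix_conj_mem_conj_class)
  moreover have "matrix_conj L (unipotent A \<omega>) =
      mat3 (\<omega> * (- 2 - 3 * \<omega>)) (- (\<omega> * A)) \<omega> (- (\<omega> * A ^ q)) (- \<omega>) 0 \<omega> 0 0"
    using SU3_invertible[OF \<open>L \<in> SU3 q\<close>] cube_root_witness_identity[OF omega_cube_root A_norm]
    by (intro matrix_conj_eqI) (simp_all add: L_def unipotent_def)
  ultimately show ?thesis
    by simp
qed

lemma killing_graph_weyl_edge:
  defines "\<beta> \<equiv> - 2 - 3 * \<omega>"
  shows "(unipotent A \<beta>, matrix_conj weyl (unipotent A \<beta>))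
    \<in> killing_graph (SU3 q) (conj_class (SU3 q) u0)"
proof -
  have x_mem: "unipotent A \<beta> \<in> conj_class (SU3 q) u0"
    using minus_two_minus_three_omega_trace unfolding \<beta>_def by (rule unipotent_mem_conj_class)
  have y_mem: "matrix_conj weyl (unipotent A \<beta>) \<in> conj_class (SU3 q) u0"
    using x_mem weyl_mem by (rule SU3.matrix_conj_mem_conj_class)
  have "A \<noteq> 0"
    using A_norm by auto
  then have "unipotent A \<beta> \<noteq> matrix_conj weyl (unipotent A \<beta>)"
    unfolding matrix_conj_weyl_unipotent by (simp add: unipotent_def mat3_eq_iff)
  moreover have "mat3 (\<omega> * \<beta>) (- (\<omega> * A)) \<omega> (- (\<omega> * A ^ q)) (- \<omega>) 0 \<omega> 0 0 **
      (unipotent A \<beta> ** matrix_conj weyl (unipotent A \<beta>)) =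
      (unipotent A \<beta> ** matrix_conj weyl (unipotent A \<beta>)) **
      mat3 (\<omega> * \<beta>) (- (\<omega> * A)) \<omega> (- (\<omega> * A ^ q)) (- \<omega>) 0 \<omega> 0 0"
    unfolding matrix_conj_weyl_unipotent by (simp add: unipotent_def mat3_mult mat3_eq_iff algebra_simps)
  ultimately show ?thesis
    using x_mem y_mem weyl_edge_witness_mem killing_graph_iff[OF SU3.conj_class_subset[OF u0_mem]]
    unfolding \<beta>_def by blast
qed

lemma weyl_mem_component_stabilizer: "weyl \<in> component_stabilizer (SU3 q) u0"
proof -
  define \<beta> where "\<beta> = - 2 - 3 * \<omega>"
  obtain a b where u: "unipotent a b \<in> SU3 q" and u_conj: "matrix_conj (unipotent a b) u0 = unipotent A \<beta>"
    using unipotent_conjugate minus_two_minus_three_omega_trace unfolding \<beta>_def by blast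
  have "(u0, unipotent A \<beta>) \<in> (killing_graph (SU3 q) (conj_class (SU3 q) u0))\<^sup>*"
    using unipotent_mem_component_stabilizer[OF u] u_conj by (simp add: component_stabilizer_def)
  then have "(u0, matrix_conj weyl (unipotent A \<beta>)) \<in> (killing_graph (SU3 q) (conj_class (SU3 q) u0))\<^sup>*"
    using killing_graph_weyl_edge unfolding \<beta>_def by (rule rtrancl_into_rtrancl)
  moreover have "matrix_conj weyl (unipotent A \<beta>) = matrix_conj (weyl ** unipotent a b) u0"
    using u u_conj weyl_mem by (simp add: matrix_conj_mult SU3_invertible)
  ultimately have "weyl ** unipotent a b \<in> component_stabilizer (SU3 q) u0"
    using u weyl_mem by (simp add: component_stabilizer_def SU3.mult_mem)
  moreover have "matrix_inv (unipotent a b) \<in> component_stabilizer (SU3 q) u0"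
    using SU3.inv_mem[OF u] unipotent_mem_component_stabilizer by (simp add: matrix_inv_unipotent[OF u])
  ultimately have "weyl ** unipotent a b ** matrix_inv (unipotent a b) \<in> component_stabilizer (SU3 q) u0"
    by (rule SU3.component_stabilizer_mult[OF u0_mem])
  then show ?thesis
    using u by (simp add: matrix_inv_right SU3_invertible flip: matrix_mul_assoc)
qed

lemma killing_irreducible_C3:
  assumes norm_onto: "\<And>c::'a. c ^ q = c \<Longrightarrow> \<exists>a. a ^ q * a = c"
  shows "killing_irreducible (SU3 q) (conj_class (SU3 q) u0)"
  using u0_mem
proof (rule SU3.killing_irreducible_if_component_stabilizer)
  show "SU3 q \<subseteq> component_stabilizer (SU3 q) u0"
    using norm_onto by (rule SU3_subset_if_unipotent_weyl)
      (simp_all add: SU3.component_stabilizer_mult u0_mem unipotent_mem_component_stabilizer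
        weyl_mem_component_stabilizer)
qed

end


theorem proposition4p12:
  fixes q :: nat and \<xi> \<alpha> :: "'a::{field,finite}" and l :: nat
  assumes "prime_power q" and "q \<noteq> 2" and "q mod 3 = 2"
    and "CARD('a) = q ^ 2"
    and "\<forall>x::'a. x \<noteq> 0 \<longrightarrow> (\<exists>n::nat. x = \<xi> ^ n)"
    and "\<alpha> \<noteq> 0" and "\<alpha> + \<alpha> ^ q + 1 = 0"
    and "l \<le> 2"
  shows "killing_irreducible (SU3 q) (C3_class q \<xi> \<alpha> l)"
proof -
  note card = assms(4)
  have gen: "mult_generator \<xi>"
    using assms(5) by (simp add: mult_generator_def)
  have "2 < CARD('a)"
    using power_mono[OF prime_power_ge_two[OF assms(1)], of 2] card by simp
  then have "\<xi> \<noteq> 0"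
    by (rule generator_nonzero[OF gen])
  define A where "A = \<xi> ^ (l * (q - 1))"
  have A_norm: "A ^ q * A = 1"
    unfolding A_def using gen \<open>\<xi> \<noteq> 0\<close> card by (rule generator_power_norm)
  obtain \<omega> :: 'a where "\<omega> ^ 2 + \<omega> + 1 = 0" and "\<omega> ^ q = \<omega> ^ 2"
    using cube_root_of_unity_exists[OF gen \<open>\<xi> \<noteq> 0\<close> card assms(3)] by blast
  interpret C3_setting q A \<alpha> \<omega>
    by unfold_locales (use frobenius_add[OF assms(1) card] frobenius_frobenius[OF card] A_norm
        assms(7) \<open>\<omega> ^ 2 + \<omega> + 1 = 0\<close> \<open>\<omega> ^ q = \<omega> ^ 2\<close> in auto)
  have "inverse A = A ^ q"
    using inverse_unique[of A "A ^ q"] A_norm by (simp add: mult.commute)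
  then have "rep_C3 q \<xi> \<alpha> l = unipotent A \<alpha>"
    unfolding rep_C3_def unipotent_def mat3_def A_def[symmetric] by simp
  then show ?thesis
    unfolding C3_class_def using norm_surjective[OF gen \<open>\<xi> \<noteq> 0\<close> card] by (simp add: killing_irreducible_C3)
qed

end
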